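(* Let $X$ be a real Banach space such that $X^*$ has the Radon–Nikodym property (in the sense below), and let $C$ be a nonempty closed convex subset of $X^*$. Then $w^*\text{-}\mathrm{Exp}\,C$ is norm-dense in $\operatorname{int}\operatorname{dom}(\sigma_C|_X)$.
   Context: For a nonempty closed convex $C\subset X^*$, the support function on $X$ is $\sigma_C(u)=\sup_{c^*\in C}\langle c^*,u\rangle$ for $u\in X$, and $\operatorname{dom}(\sigma_C|_X)=\{u\in X:\sigma_C(u)<+\infty\}$, with interior taken in the norm topology of $X$. A point $u^*\in C$ is $w^*$-strongly exposed if there exists $u\in X$ such that for every sequence $(u_n^* )\subset C$, $\lim_n\langle u_n^*,u\rangle=\sigma_C(u)$ implies $\lim_n\|u_n^*-u^*\|=0$; such $u$ is called a $w^*$-strongly exposing functional for $u^*$. $w^*\text{-}\mathrm{exp}\,C$ denotes the set of $w^*$-strongly exposed points of $C$, and $w^*\text{-}\mathrm{Exp}\,C$ the set of all $u\in X$ that are $w^*$-strongly exposing functionals for some point of $C$. $X^*$ is said to have the Radon–Nikodym property if every nonempty weak$^*$-compact convex subset $K$ of $X^*$ satisfies $K=\overline{\mathrm{co}}^{w^*}(w^*\text{-}\mathrm{exp}\,K)$. *)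

theory Defs
  imports "HOL-Analysis.Analysis"
begin

text \<open>The dual space X* of a real Banach space X is modelled as the type of
bounded linear functionals  'a \<Rightarrow>L real ; the pairing is blinfun_apply.\<close>

text \<open>Weak-star topology on X*: the coarsest topology making all evaluation maps
continuous, i.e. the pullback of the product (pointwise) topology on 'a \<Rightarrow> real.\<close>
definition wstar_topology :: "('a::real_normed_vector \<Rightarrow>\<^sub>L real) topology" where
  "wstar_topology = pullback_topology UNIV blinfun_apply euclidean"

definition support_fun :: "('a::real_normed_vector \<Rightarrow>\<^sub>L real) set \<Rightarrow> 'a \<Rightarrow> ereal" where
  "support_fun C u = (SUP c\<in>C. ereal (blinfun_apply c u))"

definition support_dom :: "('a::real_normed_vector \<Rightarrow>\<^sub>L real) set \<Rightarrow> 'a set" where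
  "support_dom C = {u. support_fun C u < \<infinity>}"

definition wstar_strongly_exposes ::
  "('a::real_normed_vector \<Rightarrow>\<^sub>L real) set \<Rightarrow> 'a \<Rightarrow> ('a \<Rightarrow>\<^sub>L real) \<Rightarrow> bool" where
  "wstar_strongly_exposes C u p \<longleftrightarrow> p \<in> C \<and>
     (\<forall>s::nat \<Rightarrow> ('a \<Rightarrow>\<^sub>L real). (\<forall>n. s n \<in> C) \<longrightarrow>
        ((\<lambda>n. ereal (blinfun_apply (s n) u)) \<longlonglongrightarrow> support_fun C u) \<longrightarrow>
        ((\<lambda>n. norm (s n - p)) \<longlonglongrightarrow> 0))"

definition wstar_exp :: "('a::real_normed_vector \<Rightarrow>\<^sub>L real) set \<Rightarrow> ('a \<Rightarrow>\<^sub>L real) set" where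
  "wstar_exp C = {p. \<exists>u. wstar_strongly_exposes C u p}"

definition wstar_Exp :: "('a::real_normed_vector \<Rightarrow>\<^sub>L real) set \<Rightarrow> 'a set" where
  "wstar_Exp C = {u. \<exists>p. wstar_strongly_exposes C u p}"

definition dual_RNP :: "'a::real_normed_vector itself \<Rightarrow> bool" where
  "dual_RNP _ \<longleftrightarrow> (\<forall>K :: ('a \<Rightarrow>\<^sub>L real) set.
     K \<noteq> {} \<and> convex K \<and> compactin wstar_topology K \<longrightarrow>
     K = wstar_topology closure_of (convex hull (wstar_exp K)))"

end

theory Submission
  imports Defs
begin

(*
  Near a point of int dom(sigma_C) the support function is bounded above (Baire category), so
  the subdifferential of sigma_C there is nonempty (Banach-Alaoglu) and uniformly norm-bounded.
  Since X* has the Radon-Nikodym property, every bounded set of functionals has slices of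
  arbitrarily small diameter; by monotonicity of the subdifferential, a slice of the
  subgradients over a ball turns into a smaller ball on which all subgradients are close to one
  another. Iterating gives nested balls shrinking to a point u at which the subdifferential is
  single-valued and norm upper semicontinuous, and a local estimate shows that every functional
  of C nearly maximising u is then close to the subgradient at u: u is w*-strongly exposing.
*)

section \<open>The weak-star topology\<close>

lemma topspace_wstar_topology [simp]: "topspace wstar_topology = UNIV"
  by (simp add: wstar_topology_def topspace_pullback_topology)

lemma continuous_map_wstar_apply:
  "continuous_map wstar_topology euclideanreal (\<lambda>c. blinfun_apply c x)"
proof -
  have "continuous_map (euclidean :: ('a::real_normed_vector \<Rightarrow> real) topology) euclideanreal (\<lambda>f. f x)"
    using continuous_map_product_projection[of x UNIV "\<lambda>_. euclideanreal"]
    by (simp add: euclidean_product_topology)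
  from continuous_map_pullback[OF this, of UNIV blinfun_apply]
  show ?thesis unfolding wstar_topology_def by (simp add: o_def)
qed

lemma compactin_wstar_if_compact_image:
  assumes "compact (blinfun_apply ` K)"
  shows "compactin wstar_topology K"
proof -
  have "continuous_map (subtopology euclidean (range blinfun_apply)) wstar_topology Blinfun"
    unfolding wstar_topology_def
  proof (rule continuous_map_pullback')
    show "continuous_map (subtopology euclidean (range blinfun_apply)) euclidean (blinfun_apply \<circ> Blinfun)"
      by (rule continuous_map_eq[of _ _ id]) (auto simp: blinfun_apply_inverse)
  qed simp
  moreover have "compactin (subtopology euclidean (range blinfun_apply)) (blinfun_apply ` K)"
    using assms by (simp add: compactin_subtopology image_mono)
  ultimately have "compactin wstar_topology (Blinfun ` blinfun_apply ` K)"
    by (rule image_compactin[rotated])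
  then show ?thesis by (simp add: image_image blinfun_apply_inverse)
qed

lemma closedin_wstar_apply_ge: "closedin wstar_topology {c. a \<le> blinfun_apply c x}"
  using closedin_continuous_map_preimage[OF continuous_map_wstar_apply, of "{a..}" x] by simp

lemma closedin_wstar_majorized:
  "closedin wstar_topology {c. \<forall>x. ereal (blinfun_apply c x) \<le> G x}"
proof -
  have "closedin wstar_topology {c. ereal (blinfun_apply c x) \<le> G x}" for x
  proof (cases "G x")
    case (real r)
    then show ?thesis
      using closedin_continuous_map_preimage[OF continuous_map_wstar_apply, of "{..r}" x] by simp
  qed (use closedin_topspace[of wstar_topology] in simp_all)
  then have "closedin wstar_topology (\<Inter>x. {c. ereal (blinfun_apply c x) \<le> G x})"
    by (intro closedin_Inter) auto
  then show ?thesis by (simp add: Inter_eq)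
qed

lemma convex_majorized: "convex {c :: 'a::real_normed_vector \<Rightarrow>\<^sub>L real. \<forall>x. blinfun_apply c x \<le> g x}"
  unfolding convex_def by (auto simp: blinfun.add_left blinfun.scaleR_left intro!: convex_bound_le)

lemma abs_le_if_linear_majorized:
  assumes "linear f" "\<forall>x. f x \<le> g x" "\<And>x. g x \<le> R * norm x"
  shows "\<bar>f x\<bar> \<le> R * norm x"
proof -
  have "f x \<le> g x" "f (-x) \<le> g (-x)" "f (-x) = - f x"
    using assms(1,2) by (blast, blast, simp add: linear_neg)
  then show ?thesis using assms(3)[of x] assms(3)[of "-x"] by (auto simp: abs_le_iff)
qed

lemma compact_linear_majorized:
  fixes g :: "'a::real_normed_vector \<Rightarrow> real"
  assumes g_le: "\<And>x. g x \<le> R * norm x"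
  shows "compact {f. linear f \<and> (\<forall>x. f x \<le> g x)}" (is "compact ?L")
proof -
  define P where "P = PiE UNIV (\<lambda>x::'a. {-R * norm x .. R * norm x})"
  have "compact P"
    using compactin_PiE[of "\<lambda>_. euclideanreal" UNIV "\<lambda>x::'a. {-R * norm x .. R * norm x}"]
    by (simp add: P_def euclidean_product_topology)
  moreover have "closed ?L"
  proof -
    have "?L = (\<Inter>x. \<Inter>y. {f. f (x + y) = f x + f y}) \<inter> (\<Inter>a. \<Inter>x. {f. f (a *\<^sub>R x) = a * f x})
        \<inter> (\<Inter>x. {f. f x \<le> g x})"
      by (auto simp: linear_iff)
    moreover have "closed \<dots>"
      by (intro closed_Int closed_INT ballI closed_Collect_eq closed_Collect_le
          continuous_intros continuous_on_product_coordinates)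
    ultimately show ?thesis by simp
  qed
  moreover have "?L \<subseteq> P"
  proof
    fix f assume "f \<in> ?L"
    then have "- (R * norm x) \<le> f x \<and> f x \<le> R * norm x" for x
      using abs_le_if_linear_majorized[of f g R x] g_le by auto
    then show "f \<in> P" by (simp add: P_def PiE_iff)
  qed
  ultimately show ?thesis
    using compact_Int_closed[of P ?L] by (simp add: Int_absorb1)
qed

theorem Banach_Alaoglu:
  fixes g :: "'a::real_normed_vector \<Rightarrow> real"
  assumes g_le: "\<And>x. g x \<le> R * norm x"
  shows "compactin wstar_topology {c. \<forall>x. blinfun_apply c x \<le> g x}"
proof (rule compactin_wstar_if_compact_image)
  have "blinfun_apply ` {c. \<forall>x. blinfun_apply c x \<le> g x} = {f. linear f \<and> (\<forall>x. f x \<le> g x)}"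
  proof (intro antisym subsetI)
    fix f assume f: "f \<in> {f. linear f \<and> (\<forall>x. f x \<le> g x)}"
    then have "bounded_linear f"
      using abs_le_if_linear_majorized[of f g R] g_le
      by (intro bounded_linear_intro[where K = R]) (auto simp: linear_add linear_scale mult.commute)
    then show "f \<in> blinfun_apply ` {c. \<forall>x. blinfun_apply c x \<le> g x}"
      using f by (intro image_eqI[of _ _ "Blinfun f"]) (auto simp: bounded_linear_Blinfun_apply)
  qed (auto simp: blinfun.bounded_linear_right bounded_linear.linear)
  then show "compact (blinfun_apply ` {c. \<forall>x. blinfun_apply c x \<le> g x})"
    using compact_linear_majorized[OF g_le] by simp
qed

section \<open>Support functions\<close>

lemma support_fun_upper: "c \<in> C \<Longrightarrow> ereal (blinfun_apply c x) \<le> support_fun C x"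
  unfolding support_fun_def by (rule SUP_upper)

lemma support_fun_le_ereal_iff:
  "support_fun C x \<le> ereal b \<longleftrightarrow> (\<forall>c\<in>C. blinfun_apply c x \<le> b)"
  unfolding support_fun_def by (simp add: SUP_le_iff)

lemma support_fun_finite:
  assumes "C \<noteq> {}" "support_fun C x < \<infinity>"
  obtains s where "support_fun C x = ereal s"
proof -
  obtain c where "c \<in> C" using assms(1) by blast
  then have "support_fun C x \<noteq> -\<infinity>" using support_fun_upper[of c C x] by auto
  with assms(2) show ?thesis using that by (cases "support_fun C x") auto
qed

lemma support_fun_approx:
  assumes "support_fun C x = ereal s" "e > 0"
  obtains c where "c \<in> C" "s - e < blinfun_apply c x"
proof -
  have "\<not> support_fun C x \<le> ereal (s - e)" using assms by simp
  then show ?thesis using that support_fun_le_ereal_iff[of C x "s - e"] by (auto simp: not_le)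
qed

lemma LIMSEQ_lower_approx:
  fixes a :: "nat \<Rightarrow> real"
  assumes "\<And>n. s - inverse (real (Suc n)) < a n" "\<And>n. a n \<le> s"
  shows "a \<longlonglongrightarrow> s"
proof (rule tendsto_sandwich)
  show "\<forall>\<^sub>F n in sequentially. s - inverse (real (Suc n)) \<le> a n"
    by (intro always_eventually allI less_imp_le assms(1))
  show "(\<lambda>n. s - inverse (real (Suc n))) \<longlonglongrightarrow> s"
    using tendsto_diff[OF tendsto_const LIMSEQ_inverse_real_of_nat, of s] by simp
qed (use assms(2) in auto)

lemma support_fun_approx_seq:
  assumes "support_fun C x = ereal s"
  obtains t where "\<And>n. t n \<in> C" "(\<lambda>n. blinfun_apply (t n) x) \<longlonglongrightarrow> s"
proof -
  have "\<forall>n. \<exists>c\<in>C. s - inverse (real (Suc n)) < blinfun_apply c x"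
    by (metis support_fun_approx[OF assms] of_nat_0_less_iff positive_imp_inverse_positive zero_less_Suc)
  then obtain t where t: "\<And>n. t n \<in> C" "\<And>n. s - inverse (real (Suc n)) < blinfun_apply (t n) x"
    by metis
  moreover have "blinfun_apply (t n) x \<le> s" for n
    using support_fun_upper[OF t(1)] assms by (metis ereal_less_eq(3))
  ultimately show ?thesis by (intro that[OF t(1)] LIMSEQ_lower_approx)
qed

lemma closed_support_fun_sublevel: "closed {x. support_fun C x \<le> ereal b}"
proof -
  have "{x. support_fun C x \<le> ereal b} = (\<Inter>c\<in>C. {x. blinfun_apply c x \<le> b})"
    by (auto simp: support_fun_le_ereal_iff)
  moreover have "closed (\<Inter>c\<in>C. {x. blinfun_apply c x \<le> b})"
    by (intro closed_INT ballI closed_Collect_le continuous_intros)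
  ultimately show ?thesis by simp
qed

lemma support_fun_bounded_on_subball:
  fixes C :: "('a::banach \<Rightarrow>\<^sub>L real) set"
  assumes "C \<noteq> {}" "r > 0" "cball u r \<subseteq> support_dom C"
  obtains v r' k where "r' > 0" "ball v r' \<subseteq> cball u r" "\<forall>w\<in>ball v r'. support_fun C w \<le> ereal k"
proof -
  define F where "F k = cball u r \<inter> {x. support_fun C x \<le> ereal (real k)}" for k :: nat
  have "\<Union>(range F) = cball u r"
  proof (intro antisym subsetI)
    fix x assume x: "x \<in> cball u r"
    then obtain s where "support_fun C x = ereal s"
      using assms support_fun_finite unfolding support_dom_def by blast
    moreover obtain k :: nat where "s \<le> real k" using real_arch_simple by blast
    ultimately show "x \<in> \<Union>(range F)" using x by (auto simp: F_def)
  qed (auto simp: F_def)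
  moreover have "u \<in> interior (cball u r)"
    using assms(2) by (meson centre_in_ball ball_subset_cball interior_maximal open_ball subsetD)
  ultimately have "\<exists>T\<in>range F. \<not> (closed T \<and> interior T = {})"
    using Baire_category_alt[of euclidean "range F"] completely_metrizable_space_euclidean
    by auto
  then obtain k where "interior (F k) \<noteq> {}"
    by (auto simp: F_def closed_support_fun_sublevel)
  then obtain v r' where "r' > 0" "ball v r' \<subseteq> F k"
    by (meson ex_in_conv open_contains_ball open_interior interior_subset order_trans)
  then show ?thesis by (intro that) (auto simp: F_def)
qed

text \<open>Sublinearity transports the bound from a small ball around v to one around u, through
  the reflected point \<open>2u - v\<close>.\<close>
lemma support_fun_locally_bounded:
  fixes C :: "('a::banach \<Rightarrow>\<^sub>L real) set"
  assumes "C \<noteq> {}" "u \<in> interior (support_dom C)"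
  obtains \<rho> M where "\<rho> > 0" "\<forall>v\<in>ball u \<rho>. support_fun C v \<le> ereal M"
proof -
  obtain r where r: "r > 0" "cball u r \<subseteq> support_dom C"
    using assms(2) by (meson mem_interior_cball)
  obtain v r' k where r': "r' > 0" "ball v r' \<subseteq> cball u r"
    and k: "\<forall>w\<in>ball v r'. support_fun C w \<le> ereal k"
    using support_fun_bounded_on_subball[OF assms(1) r] .
  have "v \<in> cball u r" using r' centre_in_ball by blast
  then have "2 *\<^sub>R u - v \<in> cball u r"
    by (simp add: dist_norm scaleR_2 norm_minus_commute algebra_simps)
  then obtain s where s: "support_fun C (2 *\<^sub>R u - v) = ereal s"
    using r(2) assms(1) support_fun_finite unfolding support_dom_def by blast
  have "\<forall>x\<in>ball u (r'/2). support_fun C x \<le> ereal ((k + s) / 2)"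
  proof (intro ballI iffD2[OF support_fun_le_ereal_iff])
    fix x c assume x: "x \<in> ball u (r'/2)" and c: "c \<in> C"
    have "v + 2 *\<^sub>R (x - u) \<in> ball v r'"
      using x by (auto simp: dist_norm norm_minus_commute)
    then have "blinfun_apply c (v + 2 *\<^sub>R (x - u)) \<le> k"
      using k c support_fun_le_ereal_iff by blast
    moreover have "blinfun_apply c (2 *\<^sub>R u - v) \<le> s"
      using support_fun_upper[OF c] s by (metis ereal_less_eq(3))
    moreover have "(v + 2 *\<^sub>R (x - u)) + (2 *\<^sub>R u - v) = 2 *\<^sub>R x"
      by (simp add: algebra_simps)
    then have "blinfun_apply c (v + 2 *\<^sub>R (x - u)) + blinfun_apply c (2 *\<^sub>R u - v) = 2 * blinfun_apply c x"
      by (metis blinfun.add_right blinfun.scaleR_right real_scaleR_def)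
    ultimately show "blinfun_apply c x \<le> (k + s) / 2" by (simp add: field_simps)
  qed
  then show ?thesis using that r'(1) by (meson half_gt_zero)
qed

section \<open>Subgradients of the support function\<close>

lemma abs_blinfun_apply_le:
  fixes c :: "'a::real_normed_vector \<Rightarrow>\<^sub>L real"
  assumes "norm c \<le> R" "norm x \<le> d"
  shows "\<bar>blinfun_apply c x\<bar> \<le> R * d"
  using norm_blinfun[of c x] mult_mono[OF assms order_trans[OF norm_ge_zero assms(1)] norm_ge_zero]
  by simp

lemma norm_blinfun_le_of_local_bound:
  fixes f :: "'a::real_normed_vector \<Rightarrow>\<^sub>L real"
  assumes "d > 0" "a \<ge> 0" "\<eta> \<ge> 0"
    and bound: "\<And>h. norm h < d \<Longrightarrow> blinfun_apply f h \<le> a * norm h + \<eta>"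
  shows "norm f \<le> a + 2 * \<eta> / d"
proof (rule norm_blinfun_bound)
  show "0 \<le> a + 2 * \<eta> / d" using assms(1-3) by simp
  fix x
  show "norm (blinfun_apply f x) \<le> (a + 2 * \<eta> / d) * norm x"
  proof (cases "x = 0")
    case False
    define t where "t = d / (2 * norm x)"
    have t: "t > 0" "norm (t *\<^sub>R x) = d / 2" "norm (- (t *\<^sub>R x)) = d / 2"
      using assms(1) False by (simp_all add: t_def)
    have "blinfun_apply f (t *\<^sub>R x) \<le> a * (d / 2) + \<eta>" "blinfun_apply f (- (t *\<^sub>R x)) \<le> a * (d / 2) + \<eta>"
      using bound[of "t *\<^sub>R x"] bound[of "- (t *\<^sub>R x)"] assms(1) unfolding t(2,3) by simp_all
    then have "t * blinfun_apply f x \<le> a * (d / 2) + \<eta>" "- (t * blinfun_apply f x) \<le> a * (d / 2) + \<eta>"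
      by (simp_all add: blinfun.scaleR_right blinfun.minus_right)
    then have "t * \<bar>blinfun_apply f x\<bar> \<le> a * (d / 2) + \<eta>"
      using t(1) by (simp add: abs_mult abs_le_iff)
    then have "\<bar>blinfun_apply f x\<bar> \<le> (a * (d / 2) + \<eta>) / t"
      using t(1) by (simp add: field_simps)
    also have "\<dots> = (a + 2 * \<eta> / d) * norm x"
      using assms(1) False by (simp add: t_def field_simps)
    finally show ?thesis by simp
  qed simp
qed

definition support_subdiff :: "('a::real_normed_vector \<Rightarrow>\<^sub>L real) set \<Rightarrow> 'a \<Rightarrow> ('a \<Rightarrow>\<^sub>L real) set" where
  "support_subdiff C z =
     {c. (\<forall>x. ereal (blinfun_apply c x) \<le> support_fun C x) \<and> ereal (blinfun_apply c z) = support_fun C z}"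

lemma support_fun_eq_if_subdiff: "c \<in> support_subdiff C z \<Longrightarrow> support_fun C z = ereal (blinfun_apply c z)"
  by (simp add: support_subdiff_def)

lemma support_subdiff_monotone:
  assumes "c \<in> support_subdiff C v" "d \<in> support_subdiff C z"
  shows "blinfun_apply d (v - z) \<le> blinfun_apply c (v - z)"
proof -
  have "ereal (blinfun_apply d v) \<le> support_fun C v" "support_fun C v = ereal (blinfun_apply c v)"
    "ereal (blinfun_apply c z) \<le> support_fun C z" "support_fun C z = ereal (blinfun_apply d z)"
    using assms unfolding support_subdiff_def by auto
  then show ?thesis by (simp add: blinfun.diff_right)
qed

lemma norm_le_of_support_fun_bounded:
  assumes "\<forall>x. ereal (blinfun_apply c x) \<le> support_fun C x"
    and "\<rho> > 0" "\<forall>v\<in>ball z \<rho>. support_fun C v \<le> ereal M"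
  shows "norm c \<le> 2 * (M - blinfun_apply c z) / \<rho>"
proof -
  have le_M: "blinfun_apply c (z + h) \<le> M" if "norm h < \<rho>" for h
  proof -
    have "ereal (blinfun_apply c (z + h)) \<le> support_fun C (z + h)" using assms(1) by blast
    also have "\<dots> \<le> ereal M" using assms(3) that by (simp add: dist_norm)
    finally show ?thesis by simp
  qed
  then have "blinfun_apply c h \<le> 0 * norm h + (M - blinfun_apply c z)" if "norm h < \<rho>" for h
    using le_M[OF that] by (simp add: blinfun.add_right)
  moreover have "0 \<le> M - blinfun_apply c z"
    using le_M[of 0] assms(2) by simp
  ultimately show ?thesis
    using norm_blinfun_le_of_local_bound[OF assms(2) order_refl, of "M - blinfun_apply c z" c] by simp
qed

text \<open>A subgradient maximises \<open>c z\<close> over a w*-compact slice of the functionals below the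
  support function.\<close>
lemma support_subdiff_nonempty:
  assumes "C \<noteq> {}" "\<rho> > 0" "\<forall>v\<in>ball z \<rho>. support_fun C v \<le> ereal M"
  shows "support_subdiff C z \<noteq> {}"
proof -
  obtain s where s: "support_fun C z = ereal s"
    using assms support_fun_finite[OF assms(1), of z] by (metis centre_in_ball ereal_less_PInfty order_le_less_trans)
  define E where "E = {c. \<forall>x. ereal (blinfun_apply c x) \<le> support_fun C x} \<inter> {c. s - 1 \<le> blinfun_apply c z}"
  define R where "R = 2 * (M - (s - 1)) / \<rho>"
  have E_norm: "norm c \<le> R" if "c \<in> E" for c
  proof -
    have "norm c \<le> 2 * (M - blinfun_apply c z) / \<rho>"
      using that assms(2,3) norm_le_of_support_fun_bounded by (auto simp: E_def)
    also have "\<dots> \<le> R" using that assms(2) by (auto simp: E_def R_def divide_right_mono)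
    finally show ?thesis .
  qed
  have "E \<subseteq> {c. \<forall>x. blinfun_apply c x \<le> R * norm x}"
    using abs_le_D1[OF abs_blinfun_apply_le[OF E_norm order_refl]] by blast
  then have cpt: "compactin wstar_topology E"
    by (rule closed_compactin[OF Banach_Alaoglu[of "\<lambda>x. R * norm x" R, OF order_refl]])
      (auto simp: E_def intro!: closedin_Int closedin_wstar_majorized closedin_wstar_apply_ge)
  have slice_in_E: "c \<in> E" if "c \<in> C" "s - 1 < blinfun_apply c z" for c
    using that support_fun_upper[of c C] by (auto simp: E_def)
  obtain c1 where "c1 \<in> C" "s - 1 < blinfun_apply c1 z"
    using support_fun_approx[OF s, of 1] by auto
  moreover have "compact ((\<lambda>c. blinfun_apply c z) ` E)"
    using image_compactin[OF cpt continuous_map_wstar_apply] by simp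
  ultimately obtain cm where cm: "cm \<in> E" "\<And>c. c \<in> E \<Longrightarrow> blinfun_apply c z \<le> blinfun_apply cm z"
    using compact_attains_sup[of "(\<lambda>c. blinfun_apply c z) ` E"] slice_in_E by blast
  have "s \<le> blinfun_apply cm z"
  proof (rule ccontr)
    assume "\<not> s \<le> blinfun_apply cm z"
    then obtain c where "c \<in> C" "s - min 1 (s - blinfun_apply cm z) < blinfun_apply c z"
      using support_fun_approx[OF s, of "min 1 (s - blinfun_apply cm z)"] by auto
    then show False using cm(2)[OF slice_in_E] by fastforce
  qed
  moreover have "ereal (blinfun_apply cm z) \<le> ereal s"
    using cm(1) s unfolding E_def by (metis (mono_tags) IntD1 mem_Collect_eq)
  ultimately have "cm \<in> support_subdiff C z"
    using cm(1) s by (auto simp: E_def support_subdiff_def)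
  then show ?thesis by blast
qed

definition bounded_subdiff_on :: "('a::real_normed_vector \<Rightarrow>\<^sub>L real) set \<Rightarrow> 'a set \<Rightarrow> real \<Rightarrow> bool" where
  "bounded_subdiff_on C W R \<longleftrightarrow>
     (\<forall>z\<in>W. support_subdiff C z \<noteq> {} \<and> (\<forall>c\<in>support_subdiff C z. norm c \<le> R))"

lemma bounded_subdiff_near_interior:
  fixes C :: "('a::banach \<Rightarrow>\<^sub>L real) set"
  assumes "C \<noteq> {}" "u \<in> interior (support_dom C)"
  obtains \<rho> R where "\<rho> > 0" "R > 0" "bounded_subdiff_on C (ball u \<rho>) R"
proof -
  obtain \<rho>' M where "\<rho>' > 0" and M: "\<forall>v\<in>ball u \<rho>'. support_fun C v \<le> ereal M"
    using support_fun_locally_bounded[OF assms] .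
  define \<rho> where "\<rho> = \<rho>' / 2"
  have \<rho>: "\<rho> > 0" using \<open>\<rho>' > 0\<close> by (simp add: \<rho>_def)
  obtain c0 where c0: "c0 \<in> C" using assms(1) by blast
  define R where "R = max 1 (2 * (M + norm c0 * (norm u + \<rho>)) / \<rho>)"
  have M_near: "\<forall>v\<in>ball z \<rho>. support_fun C v \<le> ereal M" if "z \<in> ball u \<rho>" for z
  proof
    fix v assume "v \<in> ball z \<rho>"
    then have "dist u v < \<rho>'" using that dist_triangle[of u v z] by (simp add: \<rho>_def)
    then show "support_fun C v \<le> ereal M" using M by simp
  qed
  have "bounded_subdiff_on C (ball u \<rho>) R"
    unfolding bounded_subdiff_on_def
  proof (intro ballI conjI)
    fix z assume z: "z \<in> ball u \<rho>"
    show "support_subdiff C z \<noteq> {}"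
      using support_subdiff_nonempty[OF assms(1) \<rho> M_near[OF z]] .
    fix c assume c: "c \<in> support_subdiff C z"
    have "norm z \<le> norm u + \<rho>"
      using z norm_triangle_ineq2[of z u] by (simp add: dist_norm norm_minus_commute)
    from abs_le_D2[OF abs_blinfun_apply_le[of c0, OF order_refl this]]
    have "- (norm c0 * (norm u + \<rho>)) \<le> blinfun_apply c0 z" by linarith
    also have "blinfun_apply c0 z \<le> blinfun_apply c z"
      using support_fun_upper[OF c0, of z] support_fun_eq_if_subdiff[OF c] by simp
    finally have c_lower: "- (norm c0 * (norm u + \<rho>)) \<le> blinfun_apply c z" .
    have "norm c \<le> 2 * (M - blinfun_apply c z) / \<rho>"
      using norm_le_of_support_fun_bounded[OF _ \<rho> M_near[OF z]] c
      unfolding support_subdiff_def by blast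
    also have "\<dots> \<le> 2 * (M + norm c0 * (norm u + \<rho>)) / \<rho>"
      using c_lower \<rho> by (simp add: divide_right_mono)
    finally show "norm c \<le> R" by (simp add: R_def)
  qed
  moreover have "R > 0" by (simp add: R_def)
  ultimately show ?thesis using that \<rho> by blast
qed

section \<open>Small slices from the Radon-Nikodym property\<close>

lemma wstar_strongly_exposesD:
  assumes "wstar_strongly_exposes C u p" "\<And>n. s n \<in> C"
    and "(\<lambda>n. ereal (blinfun_apply (s n) u)) \<longlonglongrightarrow> support_fun C u"
  shows "(\<lambda>n. norm (s n - p)) \<longlonglongrightarrow> 0"
  using assms unfolding wstar_strongly_exposes_def by blast

lemma wstar_strongly_exposes_slice:
  assumes exp: "wstar_strongly_exposes K y p" and s: "support_fun K y = ereal s" and "\<epsilon> > 0"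
  obtains \<alpha> where "\<alpha> > 0" "\<forall>c\<in>K. s - \<alpha> < blinfun_apply c y \<longrightarrow> norm (c - p) < \<epsilon>"
proof -
  have "\<exists>\<alpha>>0. \<forall>c\<in>K. s - \<alpha> < blinfun_apply c y \<longrightarrow> norm (c - p) < \<epsilon>"
  proof (rule ccontr)
    assume "\<not> ?thesis"
    then have "\<exists>c\<in>K. s - \<alpha> < blinfun_apply c y \<and> \<epsilon> \<le> norm (c - p)" if "\<alpha> > 0" for \<alpha>
      using that by (meson not_le)
    then have "\<forall>n. \<exists>c\<in>K. s - inverse (real (Suc n)) < blinfun_apply c y \<and> \<epsilon> \<le> norm (c - p)"
      by (metis inverse_positive_iff_positive of_nat_0_less_iff zero_less_Suc)
    then obtain t where t: "\<And>n. t n \<in> K" "\<And>n. s - inverse (real (Suc n)) < blinfun_apply (t n) y"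
      and far: "\<And>n. \<epsilon> \<le> norm (t n - p)"
      by metis
    have "blinfun_apply (t n) y \<le> s" for n
      using support_fun_upper[OF t(1)] s by (metis ereal_less_eq(3))
    then have "(\<lambda>n. ereal (blinfun_apply (t n) y)) \<longlonglongrightarrow> support_fun K y"
      using LIMSEQ_lower_approx[OF t(2)] s by (simp add: tendsto_ereal)
    then have "(\<lambda>n. norm (t n - p)) \<longlonglongrightarrow> 0"
      using wstar_strongly_exposesD[OF exp] t(1) by blast
    then have "\<epsilon> \<le> 0" using far by (intro LIMSEQ_le_const) auto
    then show False using \<open>\<epsilon> > 0\<close> by simp
  qed
  then show ?thesis using that by blast
qed

lemma dual_RNP_wstar_exp_nonempty:
  assumes "dual_RNP TYPE('a::real_normed_vector)"
    and "compactin wstar_topology K" "convex K" "K \<noteq> {}"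
  shows "wstar_exp (K :: ('a \<Rightarrow>\<^sub>L real) set) \<noteq> {}"
proof -
  have "K = wstar_topology closure_of (convex hull (wstar_exp K))"
    using assms unfolding dual_RNP_def by blast
  then show ?thesis using assms(4) by auto
qed

text \<open>The only use of the Radon-Nikodym property: the functionals below the support function of
  U form a w*-compact convex set, whose w*-strongly exposed point yields a small slice of U.\<close>
lemma dual_RNP_small_slice:
  fixes U :: "('a::real_normed_vector \<Rightarrow>\<^sub>L real) set"
  assumes RNP: "dual_RNP TYPE('a)" and "U \<noteq> {}" "\<forall>c\<in>U. norm c \<le> R" "\<epsilon> > 0"
  obtains y q \<alpha> d where "\<alpha> > 0" "d \<in> U" "\<forall>c\<in>U. blinfun_apply d y - \<alpha> < blinfun_apply c y \<longrightarrow> norm (c - q) < \<epsilon>"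
proof -
  have U_le: "blinfun_apply c x \<le> R * norm x" if "c \<in> U" for c x
    using abs_le_D1[OF abs_blinfun_apply_le[OF _ order_refl]] assms(3) that by blast
  then have bdd: "bdd_above ((\<lambda>c. blinfun_apply c x) ` U)" for x
    by (intro bdd_aboveI2) blast
  define g where "g x = (SUP c\<in>U. blinfun_apply c x)" for x
  define K where "K = {c. \<forall>x. blinfun_apply c x \<le> g x}"
  have UK: "U \<subseteq> K"
    using bdd by (auto simp: K_def g_def intro: cSUP_upper)
  have "g x \<le> R * norm x" for x
    using \<open>U \<noteq> {}\<close> U_le unfolding g_def by (intro cSUP_least) auto
  then have "compactin wstar_topology K"
    unfolding K_def by (rule Banach_Alaoglu)
  moreover have "convex K" unfolding K_def by (rule convex_majorized)
  moreover have "K \<noteq> {}" using UK \<open>U \<noteq> {}\<close> by blast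
  ultimately obtain p y where exp: "wstar_strongly_exposes K y p"
    using dual_RNP_wstar_exp_nonempty[OF RNP] unfolding wstar_exp_def by blast
  have "support_fun K y \<le> ereal (g y)"
    by (auto simp: support_fun_le_ereal_iff K_def)
  moreover have "support_fun K y \<noteq> -\<infinity>"
    using exp support_fun_upper[of p K y] by (auto simp: wstar_strongly_exposes_def)
  ultimately obtain s where s: "support_fun K y = ereal s" "s \<le> g y"
    by (cases "support_fun K y") auto
  obtain \<alpha> where "\<alpha> > 0" and slice: "\<forall>c\<in>K. s - \<alpha> < blinfun_apply c y \<longrightarrow> norm (c - p) < \<epsilon>"
    using wstar_strongly_exposes_slice[OF exp s(1) \<open>\<epsilon> > 0\<close>] .
  obtain d where "d \<in> U" "g y - \<alpha> / 2 < blinfun_apply d y"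
    using less_cSUP_iff[OF \<open>U \<noteq> {}\<close> bdd, of "g y - \<alpha> / 2" y] \<open>\<alpha> > 0\<close> by (auto simp: g_def)
  then show ?thesis
    using that[of "\<alpha> / 2" d y p] \<open>\<alpha> > 0\<close> s(2) slice UK by force
qed

lemma support_subdiff_shift_estimate:
  assumes c: "c \<in> support_subdiff C v" and d: "d \<in> support_subdiff C z"
    and "norm c \<le> R" "norm d \<le> R" "norm (v - (z + t *\<^sub>R y)) \<le> \<delta>"
  shows "t * blinfun_apply d y \<le> t * blinfun_apply c y + 2 * R * \<delta>"
proof -
  define h where "h = v - (z + t *\<^sub>R y)"
  have "\<bar>blinfun_apply c h\<bar> \<le> R * \<delta>" "\<bar>blinfun_apply d h\<bar> \<le> R * \<delta>"
    using assms(3-5) by (simp_all add: h_def abs_blinfun_apply_le)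
  moreover have "blinfun_apply d (t *\<^sub>R y + h) \<le> blinfun_apply c (t *\<^sub>R y + h)"
    using support_subdiff_monotone[OF c d] by (simp add: h_def algebra_simps)
  ultimately show ?thesis
    by (simp add: blinfun.add_right blinfun.scaleR_right abs_le_iff)
qed

lemma cball_shift_subset_ball:
  fixes y :: "'a::real_normed_vector"
  assumes "z \<in> ball w r"
  shows "\<exists>t>0. \<exists>e>0. \<forall>\<delta>\<le>e. cball (z + t *\<^sub>R y) \<delta> \<subseteq> ball w r"
proof -
  define e where "e = (r - dist w z) / 4"
  define t where "t = e / (norm y + 1)"
  have "e > 0" using assms by (simp add: e_def)
  then have "t > 0" unfolding t_def by (intro divide_pos_pos add_nonneg_pos) simp_all
  have "t * norm y \<le> t * (norm y + 1)" using \<open>t > 0\<close> by simp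
  also have "\<dots> = e" using add_nonneg_pos[OF norm_ge_zero zero_less_one, of y] by (simp add: t_def)
  finally have "t * norm y \<le> e" .
  have "cball (z + t *\<^sub>R y) \<delta> \<subseteq> ball w r" if "\<delta> \<le> e" for \<delta>
  proof
    fix v assume "v \<in> cball (z + t *\<^sub>R y) \<delta>"
    then have "dist w v \<le> dist w z + t * norm y + \<delta>"
      using dist_triangle[of w v z] dist_triangle[of z v "z + t *\<^sub>R y"] \<open>t > 0\<close>
      by (simp add: dist_norm)
    then show "v \<in> ball w r"
      using \<open>t * norm y \<le> e\<close> \<open>\<delta> \<le> e\<close> \<open>e > 0\<close> by (simp add: e_def)
  qed
  then show ?thesis using \<open>t > 0\<close> \<open>e > 0\<close> by blast
qed

text \<open>A small slice of the subgradients over the ball, taken at a subgradient d at z, contains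
  every subgradient at points near \<open>z + t y\<close>, by monotonicity of the subdifferential.\<close>
lemma dual_RNP_subdiff_small_on_subball:
  fixes C :: "('a::banach \<Rightarrow>\<^sub>L real) set"
  assumes RNP: "dual_RNP TYPE('a)" and bsd: "bounded_subdiff_on C W R"
    and "r > 0" "ball w r \<subseteq> W" "\<epsilon> > 0"
  obtains w' \<delta> q where "\<delta> > 0" "cball w' \<delta> \<subseteq> ball w r"
    "\<forall>v\<in>cball w' \<delta>. \<forall>c\<in>support_subdiff C v. norm (c - q) < \<epsilon>"
proof -
  define U where "U = (\<Union>z\<in>ball w r. support_subdiff C z)"
  have U_bound: "\<forall>c\<in>U. norm c \<le> R"
    using bsd assms(4) by (auto simp: U_def bounded_subdiff_on_def)
  have "w \<in> W" using assms(3,4) by auto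
  then have U_ne: "U \<noteq> {}"
    using bsd assms(3) unfolding U_def bounded_subdiff_on_def by auto
  obtain y q \<alpha> d where "\<alpha> > 0" "d \<in> U"
    and slice: "\<forall>c\<in>U. blinfun_apply d y - \<alpha> < blinfun_apply c y \<longrightarrow> norm (c - q) < \<epsilon>"
    by (rule dual_RNP_small_slice[OF RNP U_ne U_bound \<open>\<epsilon> > 0\<close>])
  then obtain z where "z \<in> ball w r" and d: "d \<in> support_subdiff C z"
    by (auto simp: U_def)
  obtain t e where "t > 0" "e > 0" and sub: "\<And>\<delta>. \<delta> \<le> e \<Longrightarrow> cball (z + t *\<^sub>R y) \<delta> \<subseteq> ball w r"
    using cball_shift_subset_ball[OF \<open>z \<in> ball w r\<close>, of y] by blast
  have "R \<ge> 0" using U_bound \<open>d \<in> U\<close> norm_ge_zero order_trans by blast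
  define \<delta> where "\<delta> = min e (t * \<alpha> / (4 * (R + 1)))"
  have "\<delta> > 0" using \<open>e > 0\<close> \<open>t > 0\<close> \<open>\<alpha> > 0\<close> \<open>R \<ge> 0\<close> by (simp add: \<delta>_def)
  have "2 * R * \<delta> \<le> 2 * (R + 1) * (t * \<alpha> / (4 * (R + 1)))"
    using \<open>\<delta> > 0\<close> \<open>R \<ge> 0\<close> by (intro mult_mono) (auto simp: \<delta>_def)
  also have "\<dots> = t * \<alpha> / 2" using \<open>R \<ge> 0\<close> by (simp add: field_simps)
  also have "\<dots> < t * \<alpha>" using \<open>t > 0\<close> \<open>\<alpha> > 0\<close> by simp
  finally have R\<delta>: "2 * R * \<delta> < t * \<alpha>" .
  have "\<delta> \<le> e" by (simp add: \<delta>_def)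
  have close: "norm (c - q) < \<epsilon>" if v: "v \<in> cball (z + t *\<^sub>R y) \<delta>" and c: "c \<in> support_subdiff C v" for v c
  proof -
    have "c \<in> U" using sub[OF \<open>\<delta> \<le> e\<close>] v c by (auto simp: U_def)
    then have "t * blinfun_apply d y \<le> t * blinfun_apply c y + 2 * R * \<delta>"
      using support_subdiff_shift_estimate[OF c d] U_bound \<open>d \<in> U\<close> v
      by (simp add: dist_norm norm_minus_commute)
    then have "t * (blinfun_apply d y - \<alpha>) < t * blinfun_apply c y"
      using R\<delta> by (simp add: right_diff_distrib)
    then show ?thesis using slice \<open>c \<in> U\<close> \<open>t > 0\<close> by simp
  qed
  then show ?thesis using that[OF \<open>\<delta> > 0\<close> sub[OF \<open>\<delta> \<le> e\<close>]] by blast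
qed

section \<open>Strongly exposing functionals\<close>

lemma norm_sub_le_if_near_subdiff:
  assumes "\<delta> > 0" "\<epsilon> \<ge> 0"
    and near: "\<forall>v\<in>ball u \<delta>. support_subdiff C v \<noteq> {} \<and> (\<forall>c\<in>support_subdiff C v. norm (c - q) \<le> \<epsilon>)"
    and su: "support_fun C u = ereal su" and s: "s \<in> C" "su - \<eta> < blinfun_apply s u"
  shows "norm (s - q) \<le> \<epsilon> + 2 * \<eta> / \<delta>"
proof (rule norm_blinfun_le_of_local_bound[OF assms(1,2)])
  have "blinfun_apply s u \<le> su" using support_fun_upper[OF s(1)] su by (metis ereal_less_eq(3))
  then show "0 \<le> \<eta>" using s(2) by simp
  fix h :: 'a assume "norm h < \<delta>"
  then have "u + h \<in> ball u \<delta>" by (simp add: dist_norm)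
  then obtain c where c: "c \<in> support_subdiff C (u + h)" "norm (c - q) \<le> \<epsilon>"
    using near by blast
  have "blinfun_apply s (u + h) \<le> blinfun_apply c (u + h)"
    using support_fun_upper[OF s(1)] support_fun_eq_if_subdiff[OF c(1)] by (metis ereal_less_eq(3))
  moreover have "blinfun_apply c u \<le> su"
    using c(1) su unfolding support_subdiff_def by (metis (mono_tags) ereal_less_eq(3) mem_Collect_eq)
  moreover have "blinfun_apply (c - q) h \<le> \<epsilon> * norm h"
    using abs_le_D1[OF abs_blinfun_apply_le[OF c(2) order_refl]] .
  ultimately show "blinfun_apply (s - q) h \<le> \<epsilon> * norm h + \<eta>"
    using s(2) by (simp add: blinfun.add_right blinfun.diff_left)
qed

definition subdiff_shrinks_at :: "('a::real_normed_vector \<Rightarrow>\<^sub>L real) set \<Rightarrow> 'a \<Rightarrow> bool" where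
  "subdiff_shrinks_at C u \<longleftrightarrow> (\<forall>\<epsilon>>0. \<exists>\<delta>>0. \<exists>q. \<forall>v\<in>ball u \<delta>.
     support_subdiff C v \<noteq> {} \<and> (\<forall>c\<in>support_subdiff C v. norm (c - q) \<le> \<epsilon>))"

lemma subdiff_shrinks_at_slice:
  assumes shrink: "subdiff_shrinks_at C u" and p: "p \<in> support_subdiff C u" and "\<epsilon> > 0"
  shows "\<exists>\<eta>>0. \<forall>s\<in>C. blinfun_apply p u - \<eta> < blinfun_apply s u \<longrightarrow> norm (s - p) \<le> \<epsilon>"
proof -
  have "\<epsilon> / 3 > 0" using \<open>\<epsilon> > 0\<close> by simp
  from shrink[unfolded subdiff_shrinks_at_def, rule_format, OF this]
  obtain \<delta> q where "\<delta> > 0" and near: "\<forall>v\<in>ball u \<delta>.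
      support_subdiff C v \<noteq> {} \<and> (\<forall>c\<in>support_subdiff C v. norm (c - q) \<le> \<epsilon> / 3)"
    by blast
  have "norm (p - q) \<le> \<epsilon> / 3" using near p centre_in_ball[of u \<delta>] \<open>\<delta> > 0\<close> by blast
  moreover have "norm (s - q) \<le> \<epsilon> / 3 + 2 * (\<epsilon> * \<delta> / 6) / \<delta>"
    if "s \<in> C" "blinfun_apply p u - \<epsilon> * \<delta> / 6 < blinfun_apply s u" for s
    using norm_sub_le_if_near_subdiff[OF \<open>\<delta> > 0\<close> _ near support_fun_eq_if_subdiff[OF p] that] \<open>\<epsilon> > 0\<close>
    by simp
  ultimately have "norm (s - p) \<le> \<epsilon>"
    if "s \<in> C" "blinfun_apply p u - \<epsilon> * \<delta> / 6 < blinfun_apply s u" for s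
    using that norm_triangle_ineq4[of "s - q" "p - q"] \<open>\<delta> > 0\<close> by fastforce
  then show ?thesis using \<open>\<epsilon> > 0\<close> \<open>\<delta> > 0\<close> by (intro exI[of _ "\<epsilon> * \<delta> / 6"]) auto
qed

lemma norm_tendsto_if_slices_shrink:
  fixes p :: "'a::real_normed_vector \<Rightarrow>\<^sub>L real"
  assumes slice: "\<And>\<epsilon>. \<epsilon> > 0 \<Longrightarrow> \<exists>\<eta>>0. \<forall>s\<in>C. a - \<eta> < blinfun_apply s u \<longrightarrow> norm (s - p) \<le> \<epsilon>"
    and t: "\<And>n. t n \<in> C" "(\<lambda>n. blinfun_apply (t n) u) \<longlonglongrightarrow> a"
  shows "(\<lambda>n. norm (t n - p)) \<longlonglongrightarrow> 0"
  unfolding tendsto_iff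
proof (intro allI impI)
  fix e :: real assume "e > 0"
  then obtain \<eta> where "\<eta> > 0" and \<eta>: "\<forall>s\<in>C. a - \<eta> < blinfun_apply s u \<longrightarrow> norm (s - p) \<le> e / 2"
    using slice[of "e / 2"] by auto
  have "\<forall>\<^sub>F n in sequentially. a - \<eta> < blinfun_apply (t n) u"
    using order_tendstoD(1)[OF t(2), of "a - \<eta>"] \<open>\<eta> > 0\<close> by simp
  then show "\<forall>\<^sub>F n in sequentially. dist (norm (t n - p)) 0 < e"
    by eventually_elim (use \<eta> t(1) \<open>e > 0\<close> in fastforce)
qed

text \<open>The exposed point is the subgradient at u, which lies in C because C is closed.\<close>
lemma wstar_Exp_if_subdiff_shrinks_at:
  assumes "closed C" and shrink: "subdiff_shrinks_at C u"
  shows "u \<in> wstar_Exp C"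
proof -
  from shrink[unfolded subdiff_shrinks_at_def, rule_format, OF zero_less_one]
  obtain \<delta> where "\<delta> > 0" "\<forall>v\<in>ball u \<delta>. support_subdiff C v \<noteq> {}" by blast
  then obtain p where p: "p \<in> support_subdiff C u" using centre_in_ball[of u \<delta>] by blast
  define su where "su = blinfun_apply p u"
  have su: "support_fun C u = ereal su"
    using support_fun_eq_if_subdiff[OF p] by (simp add: su_def)
  have converges: "(\<lambda>n. norm (t n - p)) \<longlonglongrightarrow> 0"
    if "\<And>n. t n \<in> C" "(\<lambda>n. blinfun_apply (t n) u) \<longlonglongrightarrow> su" for t
    by (rule norm_tendsto_if_slices_shrink[OF _ that])
      (use subdiff_shrinks_at_slice[OF shrink p] in \<open>simp add: su_def\<close>)
  obtain t where t: "\<And>n. t n \<in> C" "(\<lambda>n. blinfun_apply (t n) u) \<longlonglongrightarrow> su"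
    using support_fun_approx_seq[OF su] by blast
  have "(\<lambda>n. norm (t n - p)) \<longlonglongrightarrow> 0" using converges[OF t] .
  then have "t \<longlonglongrightarrow> p" by (simp only: tendsto_norm_zero_iff LIM_zero_iff)
  then have "p \<in> C" using \<open>closed C\<close> t(1) closed_sequentially by blast
  moreover have "(\<lambda>n. norm (s n - p)) \<longlonglongrightarrow> 0"
    if "\<forall>n. s n \<in> C" "(\<lambda>n. ereal (blinfun_apply (s n) u)) \<longlonglongrightarrow> support_fun C u" for s
    using that su by (intro converges) (simp_all add: lim_ereal)
  ultimately have "wstar_strongly_exposes C u p"
    unfolding wstar_strongly_exposes_def by blast
  then show ?thesis unfolding wstar_Exp_def by blast
qed

context
  fixes W :: "'a::complete_space set" and P :: "nat \<Rightarrow> 'a set \<Rightarrow> bool"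
  assumes step: "\<And>n w r. r > 0 \<Longrightarrow> ball w r \<subseteq> W \<Longrightarrow> \<exists>w' \<delta>. \<delta> > 0 \<and> cball w' \<delta> \<subseteq> ball w r \<and> P n (cball w' \<delta>)"
    and anti: "\<And>n S T. P n S \<Longrightarrow> T \<subseteq> S \<Longrightarrow> P n T"
begin

lemma nested_balls_sequence:
  assumes "r0 > 0" "ball u0 r0 \<subseteq> W"
  obtains c \<rho> where "\<And>n. \<rho> n > 0" "\<And>n. \<rho> n \<le> r0 / 2 ^ n" "\<And>n. ball (c n) (\<rho> n) \<subseteq> ball u0 r0"
    "\<And>n. cball (c (Suc n)) (\<rho> (Suc n)) \<subseteq> ball (c n) (\<rho> n)"
    "\<And>n. P n (cball (c (Suc n)) (\<rho> (Suc n)))"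
proof -
  define Inv where "Inv n x \<longleftrightarrow> snd x > 0 \<and> snd x \<le> r0 / 2 ^ n \<and> ball (fst x) (snd x) \<subseteq> ball u0 r0"
    for n and x :: "'a \<times> real"
  define Next where "Next n x y \<longleftrightarrow> cball (fst y) (snd y) \<subseteq> ball (fst x) (snd x) \<and> P n (cball (fst y) (snd y))"
    for n and x y :: "'a \<times> real"
  have "\<exists>y. Inv (Suc n) y \<and> Next n x y" if inv: "Inv n x" for n x
  proof -
    obtain w' \<delta> where w': "\<delta> > 0" "cball w' \<delta> \<subseteq> ball (fst x) (snd x)" "P n (cball w' \<delta>)"
      using step[of "snd x" "fst x" n] inv assms(2) by (auto simp: Inv_def)
    define \<delta>' where "\<delta>' = min \<delta> (snd x / 2)"
    have "\<delta>' \<le> snd x / 2" by (simp add: \<delta>'_def)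
    also have "\<dots> \<le> r0 / 2 ^ Suc n" using inv by (simp add: Inv_def field_simps)
    finally have \<delta>': "\<delta>' \<le> r0 / 2 ^ Suc n" "\<delta>' > 0" "cball w' \<delta>' \<subseteq> cball w' \<delta>"
      using w'(1) inv by (auto simp: \<delta>'_def Inv_def)
    then have sub: "cball w' \<delta>' \<subseteq> ball (fst x) (snd x)" "P n (cball w' \<delta>')"
      using w'(2,3) anti by auto
    moreover have "ball w' \<delta>' \<subseteq> ball u0 r0"
      using sub(1) inv ball_subset_cball[of w' \<delta>'] unfolding Inv_def by blast
    ultimately have "Inv (Suc n) (w', \<delta>') \<and> Next n x (w', \<delta>')"
      using \<delta>' by (simp add: Inv_def Next_def)
    then show ?thesis by blast
  qed
  moreover have "Inv 0 (u0, r0)" using assms(1) by (simp add: Inv_def)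
  ultimately obtain f where f: "\<And>n. Inv n (f n) \<and> Next n (f n) (f (Suc n))"
    using dependent_nat_choice[of Inv Next] by blast
  show ?thesis
    by (rule that[of "\<lambda>n. snd (f n)" "\<lambda>n. fst (f n)"]) (use f in \<open>simp_all add: Inv_def Next_def\<close>)
qed

lemma nested_balls_common_point:
  assumes "r0 > 0" "ball u0 r0 \<subseteq> W"
  shows "\<exists>u\<in>ball u0 r0. \<forall>n. \<exists>\<delta>>0. ball u \<delta> \<subseteq> W \<and> P n (ball u \<delta>)"
proof -
  obtain c \<rho> where \<rho>: "\<And>n. \<rho> n > 0" "\<And>n. \<rho> n \<le> r0 / 2 ^ n"
    and in_ball: "\<And>n. ball (c n) (\<rho> n) \<subseteq> ball u0 r0"
    and nest: "\<And>n. cball (c (Suc n)) (\<rho> (Suc n)) \<subseteq> ball (c n) (\<rho> n)"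
    and P_nest: "\<And>n. P n (cball (c (Suc n)) (\<rho> (Suc n)))"
    using nested_balls_sequence[OF assms] by metis
  define S where "S n = cball (c n) (\<rho> n)" for n
  have S_anti: "S n \<subseteq> S m" if "m \<le> n" for m n
    using lift_Suc_antimono_le[of S] that nest ball_subset_cball by (metis S_def order_trans)
  have S_small: "\<exists>n. \<forall>x\<in>S n. \<forall>y\<in>S n. dist x y < \<epsilon>" if \<epsilon>: "\<epsilon> > 0" for \<epsilon>
  proof -
    obtain n where "(1 / 2) ^ n < \<epsilon> / (2 * r0)"
      using real_arch_pow_inv[of "\<epsilon> / (2 * r0)" "1 / 2"] \<epsilon> assms(1) by auto
    then have "2 * (r0 / 2 ^ n) < \<epsilon>" using assms(1) by (simp add: field_simps power_divide)
    moreover have "dist x y \<le> 2 * (r0 / 2 ^ n)" if "x \<in> S n" "y \<in> S n" for x y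
      using that \<rho>(2)[of n] dist_triangle2[of x y "c n"] by (auto simp: S_def dist_commute)
    ultimately show ?thesis by force
  qed
  have S_closed: "closed (S n)" and S_ne: "S n \<noteq> {}" for n
    using \<rho>(1)[of n] by (auto simp: S_def)
  obtain u where u: "\<And>n. u \<in> S n"
    using decreasing_closed_nest[of S, OF S_closed S_ne S_anti S_small] by blast
  show ?thesis
  proof (intro bexI allI)
    show "u \<in> ball u0 r0" using u[of "Suc 0"] nest[of 0] in_ball[of 0] unfolding S_def by blast
  next
    fix n
    have "u \<in> ball (c (Suc n)) (\<rho> (Suc n))" using u[of "Suc (Suc n)"] nest[of "Suc n"] unfolding S_def by blast
    then obtain \<delta> where "\<delta> > 0" "ball u \<delta> \<subseteq> ball (c (Suc n)) (\<rho> (Suc n))"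
      by (meson open_ball open_contains_ball)
    then show "\<exists>\<delta>>0. ball u \<delta> \<subseteq> W \<and> P n (ball u \<delta>)"
      using P_nest[of n] anti in_ball[of "Suc n"] assms(2) ball_subset_cball by (meson order_trans)
  qed
qed

end

lemma wstar_Exp_meets_ball:
  fixes C :: "('a::banach \<Rightarrow>\<^sub>L real) set"
  assumes RNP: "dual_RNP TYPE('a)" and "closed C" and bsd: "bounded_subdiff_on C W R"
    and "r > 0" "ball w r \<subseteq> W"
  shows "wstar_Exp C \<inter> ball w r \<noteq> {}"
proof -
  define P where "P n S \<longleftrightarrow> (\<exists>q. \<forall>v\<in>S. \<forall>c\<in>support_subdiff C v. norm (c - q) < inverse (real (Suc n)))"
    for n S
  have "\<exists>u\<in>ball w r. \<forall>n. \<exists>\<delta>>0. ball u \<delta> \<subseteq> W \<and> P n (ball u \<delta>)"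
  proof (rule nested_balls_common_point[OF _ _ assms(4,5)])
    fix n w r assume "r > 0" "ball w r \<subseteq> W"
    then show "\<exists>w' \<delta>. \<delta> > 0 \<and> cball w' \<delta> \<subseteq> ball w r \<and> P n (cball w' \<delta>)"
      using dual_RNP_subdiff_small_on_subball[OF RNP bsd, of r w "inverse (real (Suc n))"]
      unfolding P_def by (metis inverse_positive_iff_positive of_nat_0_less_iff zero_less_Suc)
  next
    fix n S T assume "P n S" "T \<subseteq> S"
    then show "P n T" unfolding P_def by blast
  qed
  then obtain u where "u \<in> ball w r" and small: "\<And>n. \<exists>\<delta>>0. ball u \<delta> \<subseteq> W \<and> P n (ball u \<delta>)"
    by blast
  have "u \<in> wstar_Exp C"
  proof (rule wstar_Exp_if_subdiff_shrinks_at[OF \<open>closed C\<close>], unfold subdiff_shrinks_at_def, intro allI impI)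
    fix \<epsilon> :: real assume "\<epsilon> > 0"
    then obtain n where "inverse (real (Suc n)) < \<epsilon>" using reals_Archimedean by blast
    moreover obtain \<delta> q where "\<delta> > 0" "ball u \<delta> \<subseteq> W"
      "\<forall>v\<in>ball u \<delta>. \<forall>c\<in>support_subdiff C v. norm (c - q) < inverse (real (Suc n))"
      using small[of n] unfolding P_def by blast
    ultimately show "\<exists>\<delta>>0. \<exists>q. \<forall>v\<in>ball u \<delta>.
        support_subdiff C v \<noteq> {} \<and> (\<forall>c\<in>support_subdiff C v. norm (c - q) \<le> \<epsilon>)"
      using bsd unfolding bounded_subdiff_on_def by (meson less_imp_le less_trans subsetD)
  qed
  with \<open>u \<in> ball w r\<close> show ?thesis by blast
qed

lemma support_dom_if_bounded_subdiff_on: "bounded_subdiff_on C W R \<Longrightarrow> W \<subseteq> support_dom C"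
  by (force simp: bounded_subdiff_on_def support_dom_def dest: support_fun_eq_if_subdiff)

theorem mainTheorem5:
  fixes C :: "('a::banach \<Rightarrow>\<^sub>L real) set"
  assumes "dual_RNP TYPE('a)"
    and "C \<noteq> {}" and "closed C" and "convex C"
  shows "interior (support_dom C) \<subseteq> closure (wstar_Exp C \<inter> interior (support_dom C))"
proof
  fix u assume "u \<in> interior (support_dom C)"
  then obtain \<rho> R where "\<rho> > 0" and bsd: "bounded_subdiff_on C (ball u \<rho>) R"
    using bounded_subdiff_near_interior[OF assms(2)] by blast
  then have ball_int: "ball u \<rho> \<subseteq> interior (support_dom C)"
    by (simp add: interior_maximal support_dom_if_bounded_subdiff_on)
  show "u \<in> closure (wstar_Exp C \<inter> interior (support_dom C))"
    unfolding closure_approachable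
  proof (intro allI impI)
    fix e :: real assume "e > 0"
    have "wstar_Exp C \<inter> ball u (min \<rho> e) \<noteq> {}"
      by (rule wstar_Exp_meets_ball[OF assms(1,3) bsd]) (use \<open>\<rho> > 0\<close> \<open>e > 0\<close> in auto)
    then obtain v where v: "v \<in> wstar_Exp C" "v \<in> ball u (min \<rho> e)" by blast
    then have "v \<in> interior (support_dom C)" using ball_int by auto
    moreover have "dist v u < e" using v(2) by (simp add: dist_commute)
    ultimately show "\<exists>x\<in>wstar_Exp C \<inter> interior (support_dom C). dist x u < e"
      using v(1) by blast
  qed
qed

end
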